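(* For $n\geq 2$ let $h_n$ be the number of ordered pairs of words $(w,z)$ over the alphabet $\{A,B,C,D\}$ satisfying: (i) both $w$ and $z$ start with the letter $A$, and $|w|+|z|=n$; (ii) $w$ and $z$ contain the same number of letters $A$; (iii) neither $w$ nor $z$ contains a $CB$-factor (a letter $C$ immediately followed by a letter $B$); (iv) for all $i$, if the $i$th letter $A$ from the right in $w$ is immediately preceded by a $C$ and immediately followed by a $B$, then the $i$th segment of $z$ from the left contains a letter $B$. Let $H(x)=\sum_{n\geq 2}h_nx^n$. Then \[H(x)=\frac{x^2(1-2x)}{x^6-5x^5+14x^4-26x^3+22x^2-8x+1}.\]
   Context: A segment of a word $v$ over $\{A,B,C,D\}$ is a factor (consecutive letters) that starts with a letter $A$ and ends immediately before the next letter $A$, or at the end of $v$. The $i$th segment from the left is the one starting at the $i$th letter $A$ from the left. The words $w$ and $z$ need not have the same length. *)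

theory Defs
  imports "HOL-Computational_Algebra.Formal_Power_Series"
begin

datatype letter = A | B | C | D

definition apos :: "letter list \<Rightarrow> nat list" where
  "apos w = filter (\<lambda>i. w ! i = A) [0..<length w]"

text \<open>The (i+1)-th segment from the left (i is 0-indexed): starts at the (i+1)-th letter A
  and ends immediately before the next A, or at the end of the word.\<close>
definition segment :: "letter list \<Rightarrow> nat \<Rightarrow> letter list" where
  "segment z i = (let q = apos z ! i in z ! q # takeWhile (\<lambda>c. c \<noteq> A) (drop (Suc q) z))"

definition no_CB :: "letter list \<Rightarrow> bool" where
  "no_CB w = (\<forall>j. Suc j < length w \<longrightarrow> \<not> (w ! j = C \<and> w ! Suc j = B))"

text \<open>Condition (iv), with i 0-indexed: the (i+1)-th A from the right in w.\<close>
definition cond_iv :: "letter list \<Rightarrow> letter list \<Rightarrow> bool" where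
  "cond_iv w z = (\<forall>i < length (apos w).
     (let p = rev (apos w) ! i in
       (0 < p \<and> Suc p < length w \<and> w ! (p - 1) = C \<and> w ! Suc p = B)
         \<longrightarrow> B \<in> set (segment z i)))"

definition good_pair :: "nat \<Rightarrow> letter list \<Rightarrow> letter list \<Rightarrow> bool" where
  "good_pair n w z =
     (w \<noteq> [] \<and> hd w = A \<and> z \<noteq> [] \<and> hd z = A \<and> length w + length z = n
      \<and> count_list w A = count_list z A
      \<and> no_CB w \<and> no_CB z
      \<and> cond_iv w z)"

definition h :: "nat \<Rightarrow> nat" where
  "h n = card {(w, z). good_pair n w z}"

end

(* Write w and z as sequences of segments and strip the leading A of every segment. Pairing the
   i-th segment of w from the right with the i-th segment of z from the left turns a pair (w, z)
   into a nonempty list of blocks (u, t) of CB-free words over {B, C, D}. Conditions (i)-(iii)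
   then hold automatically, and condition (iv) only relates neighbouring blocks: a block with u
   starting with B and no B in t must not be followed by a block whose u ends with C.

   Splitting off the first block gives linear equations for the generating function P of these
   block lists and Q of those whose first u does not end with C. With W = 1/(1 - 3x + x^2)
   counting CB-free words over {B, C, D} and N = 1/(1 - 2x) counting words over {C, D}, they read
   P = G + (G - F) P + F Q with G = x^2 W^2 and F = x^3 W N, and Q = (1 - x) P. Solving for P
   gives the rational function. *)

theory Submission
  imports Defs
begin

unbundle fps_syntax

section \<open>Generating functions of weighted sets\<close>

definition weight_fps :: "('a \<Rightarrow> nat) \<Rightarrow> 'a set \<Rightarrow> 'b :: semiring_1 fps" where
  "weight_fps wt S = Abs_fps (\<lambda>n. of_nat (card {x\<in>S. wt x = n}))"

definition finite_fibres :: "('a \<Rightarrow> nat) \<Rightarrow> bool" where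
  "finite_fibres wt \<longleftrightarrow> (\<forall>n. finite {x. wt x = n})"

lemma finite_fibresD: "finite_fibres wt \<Longrightarrow> finite {x\<in>S. wt x = n}"
  unfolding finite_fibres_def by (rule finite_subset[of _ "{x. wt x = n}"]) auto

lemma weight_fps_nth: "weight_fps wt S $ n = of_nat (card {x\<in>S. wt x = n})"
  by (simp add: weight_fps_def)

lemma weight_fps_image:
  assumes "inj_on f S" and "\<And>x. x \<in> S \<Longrightarrow> wt' (f x) = wt x"
  shows "weight_fps wt' (f ` S) = weight_fps wt S"
proof (rule fps_ext)
  fix n
  have "{y\<in>f ` S. wt' y = n} = f ` {x\<in>S. wt x = n}"
    using assms(2) by auto
  moreover have "inj_on f {x\<in>S. wt x = n}"
    using assms(1) by (rule inj_on_subset) auto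
  ultimately show "weight_fps wt' (f ` S) $ n = weight_fps wt S $ n"
    by (simp add: weight_fps_nth card_image)
qed

lemma weight_fps_cong: "(\<And>x. x \<in> S \<Longrightarrow> wt' x = wt x) \<Longrightarrow> weight_fps wt' S = weight_fps wt S"
  using weight_fps_image[of id S wt' wt] by simp

lemma weight_fps_singleton [simp]: "weight_fps wt {x} = fps_X ^ wt x"
proof (rule fps_ext)
  fix n
  have "{y\<in>{x}. wt y = n} = (if n = wt x then {x} else {})"
    by auto
  then show "weight_fps wt {x} $ n = fps_X ^ wt x $ n"
    by (simp add: weight_fps_nth)
qed

lemma weight_fps_Un:
  assumes "finite_fibres wt" and "S \<inter> T = {}"
  shows "weight_fps wt (S \<union> T) = weight_fps wt S + weight_fps wt T"
proof (rule fps_ext)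
  fix n
  have "{x\<in>S \<union> T. wt x = n} = {x\<in>S. wt x = n} \<union> {x\<in>T. wt x = n}"
    by auto
  moreover have "card ({x\<in>S. wt x = n} \<union> {x\<in>T. wt x = n})
      = card {x\<in>S. wt x = n} + card {x\<in>T. wt x = n}"
    using assms by (intro card_Un_disjoint finite_fibresD) auto
  ultimately show "weight_fps wt (S \<union> T) $ n = (weight_fps wt S + weight_fps wt T) $ n"
    by (simp add: weight_fps_nth)
qed

lemma weight_fps_filter_compl:
  assumes "finite_fibres wt"
  shows "weight_fps wt {x\<in>S. \<not> P x} = weight_fps wt S - (weight_fps wt {x\<in>S. P x} :: 'b :: comm_ring_1 fps)"
proof -
  have "(weight_fps wt S :: 'b fps) = weight_fps wt ({x\<in>S. P x} \<union> {x\<in>S. \<not> P x})"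
    by (rule arg_cong[where f = "weight_fps wt"]) auto
  also have "\<dots> = weight_fps wt {x\<in>S. P x} + weight_fps wt {x\<in>S. \<not> P x}"
    by (rule weight_fps_Un[OF assms]) auto
  finally show ?thesis
    by (simp add: algebra_simps)
qed

lemma weight_fps_Times:
  assumes "finite_fibres wt" and "finite_fibres wt'"
  shows "weight_fps (\<lambda>(x, y). wt x + wt' y) (S \<times> T) = weight_fps wt S * weight_fps wt' T"
proof (rule fps_ext)
  fix n
  have "{p\<in>S \<times> T. (\<lambda>(x, y). wt x + wt' y) p = n}
      = (\<Union>i\<in>{0..n}. {x\<in>S. wt x = i} \<times> {y\<in>T. wt' y = n - i})"
    by auto
  moreover have "card (\<Union>i\<in>{0..n}. {x\<in>S. wt x = i} \<times> {y\<in>T. wt' y = n - i})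
      = (\<Sum>i=0..n. card {x\<in>S. wt x = i} * card {y\<in>T. wt' y = n - i})"
    using assms by (subst card_UN_disjoint) (auto simp: card_cartesian_product dest: finite_fibresD)
  ultimately show "weight_fps (\<lambda>(x, y). wt x + wt' y) (S \<times> T) $ n
      = (weight_fps wt S * weight_fps wt' T) $ n"
    by (simp add: weight_fps_nth fps_mult_nth)
qed

lemma weight_fps_shift: "weight_fps (\<lambda>x. wt x + k) S = fps_X ^ k * weight_fps wt S"
proof (rule fps_ext)
  fix n
  have "{x\<in>S. wt x + k = n} = (if n < k then {} else {x\<in>S. wt x = n - k})"
    by auto
  then show "weight_fps (\<lambda>x. wt x + k) S $ n = (fps_X ^ k * weight_fps wt S) $ n"
    by (simp add: weight_fps_nth fps_X_power_mult_nth)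
qed

section \<open>CB-free words\<close>

lemma UNIV_letter: "(UNIV :: letter set) = {A, B, C, D}"
  using letter.exhaust by auto

instance letter :: finite
  by standard (simp add: UNIV_letter)

definition starts_B :: "letter list \<Rightarrow> bool" where
  "starts_B u \<longleftrightarrow> u \<noteq> [] \<and> hd u = B"

definition ends_C :: "letter list \<Rightarrow> bool" where
  "ends_C u \<longleftrightarrow> u \<noteq> [] \<and> last u = C"

lemma successively_iff_nth:
  "successively P xs \<longleftrightarrow> (\<forall>i. Suc i < length xs \<longrightarrow> P (xs ! i) (xs ! Suc i))"
proof (induction xs rule: induct_list012)
  case (3 x y xs)
  have "(\<forall>i. Suc i < length (x # y # xs) \<longrightarrow> P ((x # y # xs) ! i) ((x # y # xs) ! Suc i))
      \<longleftrightarrow> P x y \<and> (\<forall>i. Suc i < length (y # xs) \<longrightarrow> P ((y # xs) ! i) ((y # xs) ! Suc i))"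
    by (auto simp: All_less_Suc2 less_Suc_eq_0_disj)
  with "3.IH"(2) show ?case
    by simp
qed simp_all

lemma no_CB_iff_successively: "no_CB w \<longleftrightarrow> successively (\<lambda>x y. \<not> (x = C \<and> y = B)) w"
  by (simp add: no_CB_def successively_iff_nth)

lemma no_CB_Nil [simp]: "no_CB []"
  by (simp add: no_CB_iff_successively)

lemma no_CB_singleton [simp]: "no_CB [x]"
  by (simp add: no_CB_iff_successively)

lemma no_CB_Cons: "no_CB (x # u) \<longleftrightarrow> no_CB u \<and> \<not> (x = C \<and> starts_B u)"
  by (auto simp: no_CB_iff_successively successively_Cons starts_B_def)

lemma no_CB_append: "no_CB (u @ v) \<longleftrightarrow> no_CB u \<and> no_CB v \<and> \<not> (ends_C u \<and> starts_B v)"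
  by (auto simp: no_CB_iff_successively successively_append_iff starts_B_def ends_C_def)

definition segment_tails :: "letter list set" where
  "segment_tails = {u. A \<notin> set u \<and> no_CB u}"

definition tails_fps :: "rat fps" where
  "tails_fps = weight_fps length segment_tails"

definition CD_fps :: "rat fps" where
  "CD_fps = weight_fps length (lists {C, D})"

lemma finite_fibres_length: "finite_fibres (length :: 'a :: finite list \<Rightarrow> nat)"
  unfolding finite_fibres_def using finite_lists_length_eq[of "UNIV :: 'a set"] by simp

lemma weight_fps_length_image:
  assumes "inj_on f S" and "\<And>x. x \<in> S \<Longrightarrow> length (f x) = length x + k"
  shows "weight_fps length (f ` S) = fps_X ^ k * weight_fps length S"
proof -
  have "weight_fps length (f ` S) = weight_fps (\<lambda>x. length x + k) S"
    using assms by (rule weight_fps_image)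
  then show ?thesis
    by (simp add: weight_fps_shift)
qed

lemma weight_fps_length_Cons: "weight_fps length (Cons x ` S) = fps_X * weight_fps length S"
  using weight_fps_length_image[of "Cons x" S 1] by simp

lemma weight_fps_length_snoc: "weight_fps length ((\<lambda>u. u @ [x]) ` S) = fps_X * weight_fps length S"
  using weight_fps_length_image[of "\<lambda>u. u @ [x]" S 1] by (simp add: inj_on_def)

lemma Cons_in_segment_tails:
  "x # v \<in> segment_tails \<longleftrightarrow> x \<noteq> A \<and> v \<in> segment_tails \<and> \<not> (x = C \<and> starts_B v)"
  by (auto simp: segment_tails_def no_CB_Cons)

lemma snoc_C_in_segment_tails: "v @ [C] \<in> segment_tails \<longleftrightarrow> v \<in> segment_tails"
  by (auto simp: segment_tails_def no_CB_append starts_B_def)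

lemma segment_tails_decomp:
  "segment_tails = {[]} \<union> Cons B ` segment_tails \<union> Cons D ` segment_tails
     \<union> Cons C ` {v\<in>segment_tails. \<not> starts_B v}"
proof (intro set_eqI iffI)
  fix u assume u: "u \<in> segment_tails"
  show "u \<in> {[]} \<union> Cons B ` segment_tails \<union> Cons D ` segment_tails
     \<union> Cons C ` {v\<in>segment_tails. \<not> starts_B v}"
  proof (cases u)
    case (Cons x v)
    with u show ?thesis
      by (cases x) (auto simp: Cons_in_segment_tails)
  qed simp
qed (auto simp: segment_tails_def no_CB_Cons)

lemma segment_tails_starts_B: "{v\<in>segment_tails. starts_B v} = Cons B ` segment_tails"
  by (auto simp: starts_B_def Cons_in_segment_tails neq_Nil_conv)

lemma segment_tails_ends_C: "{v\<in>segment_tails. ends_C v} = (\<lambda>v. v @ [C]) ` segment_tails"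
  by (auto simp: ends_C_def snoc_C_in_segment_tails image_iff)
     (metis append_butlast_last_id snoc_C_in_segment_tails)

lemma segment_tails_starts_B_not_ends_C:
  "{v\<in>segment_tails. starts_B v \<and> \<not> ends_C v} = Cons B ` {v\<in>segment_tails. \<not> ends_C v}"
proof (intro set_eqI iffI)
  fix u assume u: "u \<in> {v\<in>segment_tails. starts_B v \<and> \<not> ends_C v}"
  then obtain v where "u = B # v"
    by (auto simp: starts_B_def neq_Nil_conv)
  with u show "u \<in> Cons B ` {v\<in>segment_tails. \<not> ends_C v}"
    by (auto simp: Cons_in_segment_tails ends_C_def split: if_splits)
qed (auto simp: Cons_in_segment_tails starts_B_def ends_C_def split: if_splits)

lemma tails_fps_starts_B: "weight_fps length {v\<in>segment_tails. starts_B v} = fps_X * tails_fps"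
  by (simp add: segment_tails_starts_B weight_fps_length_Cons tails_fps_def)

lemma tails_fps_not_ends_C:
  "weight_fps length {v\<in>segment_tails. \<not> ends_C v} = (1 - fps_X) * tails_fps"
  by (simp add: weight_fps_filter_compl[OF finite_fibres_length] segment_tails_ends_C
      weight_fps_length_snoc tails_fps_def algebra_simps)

lemma tails_fps_starts_B_not_ends_C:
  "weight_fps length {v\<in>segment_tails. starts_B v \<and> \<not> ends_C v} = fps_X * (1 - fps_X) * tails_fps"
  by (simp add: segment_tails_starts_B_not_ends_C weight_fps_length_Cons tails_fps_not_ends_C)

lemma tails_fps_eq: "tails_fps * (1 - 3 * fps_X + fps_X ^ 2) = 1"
proof -
  have "tails_fps = weight_fps length {[] :: letter list} + weight_fps length (Cons B ` segment_tails)
      + weight_fps length (Cons D ` segment_tails)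
      + weight_fps length (Cons C ` {v\<in>segment_tails. \<not> starts_B v})"
    unfolding tails_fps_def
    by (subst segment_tails_decomp, (subst weight_fps_Un[OF finite_fibres_length], force)+) simp
  also have "\<dots> = 1 + fps_X * tails_fps + fps_X * tails_fps + fps_X * (tails_fps - fps_X * tails_fps)"
    by (simp add: weight_fps_length_Cons weight_fps_filter_compl[OF finite_fibres_length]
        tails_fps_starts_B tails_fps_def)
  finally show ?thesis
    by (simp add: algebra_simps power2_eq_square)
qed

lemma lists_CD_decomp: "lists {C, D} = {[]} \<union> Cons C ` lists {C, D} \<union> Cons D ` lists {C, D}"
proof (intro set_eqI iffI)
  fix u :: "letter list" assume "u \<in> lists {C, D}"
  then show "u \<in> {[]} \<union> Cons C ` lists {C, D} \<union> Cons D ` lists {C, D}"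
    by (cases u) auto
qed auto

lemma CD_fps_eq: "CD_fps * (1 - 2 * fps_X) = 1"
proof -
  have "CD_fps = weight_fps length {[] :: letter list} + weight_fps length (Cons C ` lists {C, D})
      + weight_fps length (Cons D ` lists {C, D})"
    unfolding CD_fps_def
    by (subst lists_CD_decomp, (subst weight_fps_Un[OF finite_fibres_length], force)+) simp
  also have "\<dots> = 1 + fps_X * CD_fps + fps_X * CD_fps"
    by (simp add: weight_fps_length_Cons CD_fps_def)
  finally show ?thesis
    by (simp add: algebra_simps)
qed

section \<open>Words as sequences of segments\<close>

definition from_segments :: "letter list list \<Rightarrow> letter list" where
  "from_segments us = concat (map ((#) A) us)"

lemma from_segments_Nil [simp]: "from_segments [] = []"
  by (simp add: from_segments_def)

lemma from_segments_Cons [simp]: "from_segments (u # us) = A # u @ from_segments us"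
  by (simp add: from_segments_def)

lemma from_segments_append: "from_segments (us @ vs) = from_segments us @ from_segments vs"
  by (simp add: from_segments_def)

lemma from_segments_eq_Nil_iff [simp]: "from_segments us = [] \<longleftrightarrow> us = []"
  by (cases us) auto

lemma length_from_segments_rev [simp]: "length (from_segments (rev us)) = length (from_segments us)"
  by (induction us) (simp_all add: from_segments_append)

lemma count_from_segments:
  "us \<in> lists {u. A \<notin> set u} \<Longrightarrow> count_list (from_segments us) A = length us"
  by (induction us) (auto simp: count_list_0_iff)

lemma takeWhile_not_A_from_segments:
  "A \<notin> set u \<Longrightarrow> takeWhile (\<lambda>c. c \<noteq> A) (u @ from_segments us) = u"
  by (cases us) (auto simp: takeWhile_append)

lemma inj_on_from_segments: "inj_on from_segments (lists {u. A \<notin> set u})"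
proof (rule inj_onI)
  fix us vs :: "letter list list"
  assume "us \<in> lists {u. A \<notin> set u}" "vs \<in> lists {u. A \<notin> set u}"
    and "from_segments us = from_segments vs"
  then show "us = vs"
  proof (induction us arbitrary: vs rule: lists.induct)
    case (Cons u us)
    then obtain v vs' where vs: "vs = v # vs'" and v: "A \<notin> set v"
      and vs': "vs' \<in> lists {u. A \<notin> set u}"
      by (cases vs) auto
    with Cons.prems have eq: "u @ from_segments us = v @ from_segments vs'"
      by simp
    have "u = takeWhile (\<lambda>c. c \<noteq> A) (u @ from_segments us)"
      using Cons.hyps by (simp add: takeWhile_not_A_from_segments)
    also have "\<dots> = v"
      unfolding eq using v by (rule takeWhile_not_A_from_segments)
    finally have "u = v" .
    with eq have "us = vs'"
      using Cons.IH[OF vs'] by simp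
    with \<open>u = v\<close> vs show ?case
      by simp
  qed (metis from_segments_eq_Nil_iff)
qed

lemma from_segments_surj:
  assumes "w \<noteq> []" and "hd w = A"
  shows "\<exists>us\<in>lists {u. A \<notin> set u}. w = from_segments us"
  using assms
proof (induction "length w" arbitrary: w rule: less_induct)
  case less
  obtain rest where w: "w = A # rest"
    using less.prems by (cases w) auto
  define u where "u = takeWhile (\<lambda>c. c \<noteq> A) rest"
  define r where "r = dropWhile (\<lambda>c. c \<noteq> A) rest"
  have rest: "rest = u @ r" and u: "A \<notin> set u"
    unfolding u_def r_def by (auto dest: set_takeWhileD)
  show ?case
  proof (cases "r = []")
    case True
    then have "w = from_segments [u]" and "[u] \<in> lists {u. A \<notin> set u}"
      using w rest u by simp_all
    then show ?thesis
      by blast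
  next
    case False
    moreover have "hd r = A"
      using False unfolding r_def by (metis (mono_tags) hd_dropWhile)
    moreover have "length r < length w"
      using w rest by simp
    ultimately obtain vs where vs: "vs \<in> lists {u. A \<notin> set u}" "r = from_segments vs"
      using less.hyps by blast
    then have "w = from_segments (u # vs)" and "u # vs \<in> lists {u. A \<notin> set u}"
      using w rest u by simp_all
    then show ?thesis
      by blast
  qed
qed

lemma no_CB_from_segments: "no_CB (from_segments us) \<longleftrightarrow> (\<forall>u\<in>set us. no_CB u)"
proof (induction us)
  case (Cons u us)
  have "\<not> starts_B (from_segments us)"
    by (cases us) (auto simp: starts_B_def)
  with Cons show ?case
    by (simp add: no_CB_Cons no_CB_append starts_B_def)
qed simp

lemma apos_append: "apos (xs @ ys) = apos xs @ map (\<lambda>i. i + length xs) (apos ys)"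
proof -
  have "[0..<length (xs @ ys)] = [0..<length xs] @ map (\<lambda>i. i + length xs) [0..<length ys]"
    by (simp add: map_add_upt upt_add_eq_append[of 0 "length xs"] add.commute)
  then have "apos (xs @ ys) = filter (\<lambda>i. (xs @ ys) ! i = A) [0..<length xs]
     @ map (\<lambda>i. i + length xs) (filter (\<lambda>i. (xs @ ys) ! (i + length xs) = A) [0..<length ys])"
    by (simp add: apos_def filter_map o_def)
  also have "filter (\<lambda>i. (xs @ ys) ! i = A) [0..<length xs] = apos xs"
    unfolding apos_def by (rule filter_cong) (auto simp: nth_append)
  also have "filter (\<lambda>i. (xs @ ys) ! (i + length xs) = A) [0..<length ys] = apos ys"
    unfolding apos_def by (rule filter_cong) (auto simp: nth_append)
  finally show ?thesis .
qed

lemma apos_eq_Nil: "A \<notin> set u \<Longrightarrow> apos u = []"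
  unfolding apos_def by (auto simp: filter_empty_conv) (metis nth_mem)

lemma apos_from_segments:
  "us \<in> lists {u. A \<notin> set u} \<Longrightarrow>
    apos (from_segments us) = map (\<lambda>j. length (from_segments (take j us))) [0..<length us]"
proof (induction us rule: lists.induct)
  case Nil
  then show ?case
    by (simp add: apos_def)
next
  case (Cons u us)
  have eq: "from_segments (u # us) = [A] @ (u @ from_segments us)"
    by simp
  have "apos [A] = [0]"
    by (simp add: apos_def)
  with Cons show ?case
    unfolding eq apos_append by (simp del: upt_Suc add: apos_eq_Nil map_upt_Suc)
qed

lemma from_segments_split:
  "j < length us \<Longrightarrow>
    from_segments us = from_segments (take j us) @ A # us ! j @ from_segments (drop (Suc j) us)"
  by (metis append_take_drop_id Cons_nth_drop_Suc from_segments_append from_segments_Cons)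

lemma segment_from_segments:
  assumes "ts \<in> lists {u. A \<notin> set u}" and "m < length ts"
  shows "segment (from_segments ts) m = A # ts ! m"
proof -
  let ?L = "from_segments (take m ts)"
  have split: "from_segments ts = ?L @ A # ts ! m @ from_segments (drop (Suc m) ts)"
    using assms(2) by (rule from_segments_split)
  have "apos (from_segments ts) ! m = length ?L"
    using assms by (simp add: apos_from_segments)
  moreover have "A \<notin> set (ts ! m)"
    using assms by (simp add: in_lists_conv_set)
  ultimately show ?thesis
    unfolding segment_def Let_def by (simp add: split nth_append takeWhile_not_A_from_segments)
qed

lemma starts_B_append_from_segments: "starts_B (u @ from_segments vs) \<longleftrightarrow> starts_B u"
  by (cases u; cases vs) (auto simp: starts_B_def)

lemma last_from_segments_eq_C:
  assumes "us \<noteq> []"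
  shows "last (from_segments us) = C \<longleftrightarrow> ends_C (last us)"
proof -
  have "from_segments us = from_segments (butlast us) @ A # last us"
    using assms by (metis append_butlast_last_id append.right_neutral from_segments_Cons
        from_segments_Nil from_segments_append)
  then show ?thesis
    by (simp add: ends_C_def)
qed

lemma A_between_C_and_B_from_segments:
  assumes "j < length us"
  defines "w \<equiv> from_segments us"
  defines "p \<equiv> length (from_segments (take j us))"
  shows "(0 < p \<and> Suc p < length w \<and> w ! (p - 1) = C \<and> w ! Suc p = B)
     \<longleftrightarrow> 0 < j \<and> ends_C (us ! (j - 1)) \<and> starts_B (us ! j)"
proof -
  let ?L = "from_segments (take j us)" and ?R = "us ! j @ from_segments (drop (Suc j) us)"
  have w: "w = ?L @ A # ?R"
    unfolding w_def using assms(1) by (rule from_segments_split)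
  have "0 < p \<longleftrightarrow> 0 < j"
    using assms(1) by (auto simp: p_def)
  moreover have "Suc p < length w \<and> w ! Suc p = B \<longleftrightarrow> starts_B (us ! j)"
    using starts_B_append_from_segments[of "us ! j" "drop (Suc j) us"]
    by (auto simp: w p_def nth_append starts_B_def hd_conv_nth)
  moreover have "w ! (p - 1) = C \<longleftrightarrow> ends_C (us ! (j - 1))" if "0 < j"
  proof -
    have "take j us \<noteq> []"
      using that assms(1) by auto
    moreover from this have "last (take j us) = us ! (j - 1)"
      using that assms(1) by (simp add: last_conv_nth)
    moreover have "w ! (p - 1) = last ?L"
      using \<open>take j us \<noteq> []\<close> by (simp add: w p_def nth_append last_conv_nth)
    ultimately show ?thesis
      by (simp add: last_from_segments_eq_C)
  qed
  ultimately show ?thesis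
    by blast
qed

lemma cond_iv_from_segments:
  assumes vs: "vs \<in> lists {u. A \<notin> set u}" and ts: "ts \<in> lists {u. A \<notin> set u}"
    and len: "length vs = length ts"
  shows "cond_iv (from_segments (rev vs)) (from_segments ts) \<longleftrightarrow>
    (\<forall>i. Suc i < length vs \<longrightarrow>
      starts_B (vs ! i) \<and> ends_C (vs ! Suc i) \<longrightarrow> B \<in> set (ts ! i))"
proof -
  let ?w = "from_segments (rev vs)" and ?k = "length vs"
  define flanked where
    "flanked p \<longleftrightarrow> 0 < p \<and> Suc p < length ?w \<and> ?w ! (p - 1) = C \<and> ?w ! Suc p = B" for p
  have rev_vs: "rev vs \<in> lists {u. A \<notin> set u}"
    using vs by (simp add: in_lists_conv_set)
  have apos: "apos ?w = map (\<lambda>j. length (from_segments (take j (rev vs)))) [0..<?k]"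
    using apos_from_segments[OF rev_vs] by simp
  have "flanked (rev (apos ?w) ! i) \<longleftrightarrow> Suc i < ?k \<and> ends_C (vs ! Suc i) \<and> starts_B (vs ! i)"
    if "i < ?k" for i
  proof -
    have "?k - Suc i < ?k"
      using that by simp
    then have "rev (apos ?w) ! i = length (from_segments (take (?k - Suc i) (rev vs)))"
      using that by (simp add: apos rev_nth del: upt_Suc)
    moreover have "rev vs ! (?k - Suc i - 1) = vs ! Suc i" if "Suc i < ?k"
      using that by (simp add: rev_nth Suc_diff_Suc)
    ultimately show ?thesis
      using A_between_C_and_B_from_segments[of "?k - Suc i" "rev vs"] that
      by (auto simp: flanked_def rev_nth)
  qed
  moreover have "B \<in> set (segment (from_segments ts) i) \<longleftrightarrow> B \<in> set (ts ! i)" if "i < ?k" for i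
    using that len by (simp add: segment_from_segments[OF ts])
  moreover have "cond_iv ?w (from_segments ts) \<longleftrightarrow>
      (\<forall>i<?k. flanked (rev (apos ?w) ! i) \<longrightarrow> B \<in> set (segment (from_segments ts) i))"
    unfolding cond_iv_def Let_def flanked_def by (simp add: apos)
  ultimately show ?thesis
    by (metis Suc_lessD)
qed

section \<open>Lists of blocks\<close>

text \<open>A block pairs the i-th segment of w from the right with the i-th segment of z from the
  left, both without their leading A.\<close>

type_synonym block = "letter list \<times> letter list"

definition block_size :: "block \<Rightarrow> nat" where
  "block_size b = length (fst b) + length (snd b) + 2"

definition blocks_size :: "block list \<Rightarrow> nat" where
  "blocks_size bs = (\<Sum>b\<leftarrow>bs. block_size b)"

definition blocks :: "block set" where
  "blocks = segment_tails \<times> segment_tails"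

definition open_block :: "block \<Rightarrow> bool" where
  "open_block b \<longleftrightarrow> starts_B (fst b) \<and> B \<notin> set (snd b)"

definition admissible :: "block list \<Rightarrow> bool" where
  "admissible = successively (\<lambda>b b'. \<not> (open_block b \<and> ends_C (fst b')))"

definition admissible_lists :: "block set \<Rightarrow> block list set" where
  "admissible_lists H = {bs. bs \<noteq> [] \<and> hd bs \<in> H \<and> set bs \<subseteq> blocks \<and> admissible bs}"

lemma finite_fibres_block_size: "finite_fibres block_size"
  unfolding finite_fibres_def
proof
  fix n
  have "finite {u :: letter list. length u \<le> n}"
    using finite_lists_length_le[of "UNIV :: letter set" n] by simp
  moreover have "{b. block_size b = n} \<subseteq> {u. length u \<le> n} \<times> {u. length u \<le> n}"
    by (auto simp: block_size_def)
  ultimately show "finite {b. block_size b = n}"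
    by (blast intro: finite_subset finite_cartesian_product)
qed

lemma length_le_blocks_size: "length bs \<le> blocks_size bs"
proof -
  have "length bs = (\<Sum>b\<leftarrow>bs. 1)"
    by (simp add: sum_list_triv)
  also have "\<dots> \<le> blocks_size bs"
    unfolding blocks_size_def by (rule sum_list_mono) (simp add: block_size_def)
  finally show ?thesis .
qed

lemma finite_fibres_blocks_size: "finite_fibres blocks_size"
  unfolding finite_fibres_def
proof
  fix n
  have "{b. block_size b \<le> n} = (\<Union>m\<le>n. {b. block_size b = m})"
    by auto
  then have "finite {b. block_size b \<le> n}"
    using finite_fibres_block_size by (simp add: finite_fibres_def)
  then have "finite {bs. set bs \<subseteq> {b. block_size b \<le> n} \<and> length bs \<le> n}"
    by (rule finite_lists_length_le)
  moreover have "{bs. blocks_size bs = n} \<subseteq> {bs. set bs \<subseteq> {b. block_size b \<le> n} \<and> length bs \<le> n}"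
    using length_le_blocks_size by (auto simp: blocks_size_def member_le_sum_list)
  ultimately show "finite {bs. blocks_size bs = n}"
    by (rule finite_subset[rotated])
qed

lemma weight_fps_block_size_Times:
  "weight_fps block_size (S \<times> T) = fps_X ^ 2 * weight_fps length S * weight_fps length T"
proof -
  have "weight_fps block_size (S \<times> T) = weight_fps (\<lambda>p. (\<lambda>(u, v). length u + length v) p + 2) (S \<times> T)"
    by (rule weight_fps_cong) (auto simp: block_size_def)
  also have "\<dots> = fps_X ^ 2 * weight_fps (\<lambda>(u, v). length u + length v) (S \<times> T)"
    by (rule weight_fps_shift)
  finally show ?thesis
    by (simp add: weight_fps_Times finite_fibres_length mult.assoc)
qed

lemma weight_fps_blocks_size_singleton:
  "weight_fps blocks_size ((\<lambda>b. [b]) ` S) = weight_fps block_size S"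
  by (rule weight_fps_image) (auto simp: blocks_size_def inj_on_def)

lemma weight_fps_blocks_size_Cons:
  "weight_fps blocks_size ((\<lambda>(b, bs). b # bs) ` (S \<times> L)) = weight_fps block_size S * weight_fps blocks_size L"
proof -
  have "weight_fps blocks_size ((\<lambda>(b, bs). b # bs) ` (S \<times> L))
      = weight_fps (\<lambda>(b, bs). block_size b + blocks_size bs) (S \<times> L)"
    by (rule weight_fps_image) (auto simp: inj_on_def blocks_size_def)
  then show ?thesis
    by (simp add: weight_fps_Times finite_fibres_block_size finite_fibres_blocks_size)
qed

lemma Cons_in_admissible_lists:
  assumes "H \<subseteq> blocks"
  shows "b # bs \<in> admissible_lists H \<longleftrightarrow> b \<in> H \<and>
    (bs = [] \<or> bs \<in> admissible_lists blocks \<and> \<not> (open_block b \<and> ends_C (fst (hd bs))))"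
  using assms by (auto simp: admissible_lists_def admissible_def successively_Cons)

lemma admissible_lists_not_ends_C:
  "admissible_lists {b\<in>blocks. \<not> ends_C (fst b)} = {bs\<in>admissible_lists blocks. \<not> ends_C (fst (hd bs))}"
  by (auto simp: admissible_lists_def)

lemma admissible_lists_decomp:
  assumes "H \<subseteq> blocks"
  shows "admissible_lists H = (\<lambda>b. [b]) ` H
    \<union> (\<lambda>(b, bs). b # bs) ` ({b\<in>H. \<not> open_block b} \<times> admissible_lists blocks)
    \<union> (\<lambda>(b, bs). b # bs) `
        ({b\<in>H. open_block b} \<times> admissible_lists {b\<in>blocks. \<not> ends_C (fst b)})"
    (is "_ = ?S \<union> ?cons ` ?NP \<union> ?cons ` ?OQ")
proof (intro set_eqI iffI)
  fix bs assume bs: "bs \<in> admissible_lists H"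
  then obtain b bs' where b: "bs = b # bs'"
    by (auto simp: admissible_lists_def neq_Nil_conv)
  consider "b \<in> H" "bs' = []" | "(b, bs') \<in> ?NP" | "(b, bs') \<in> ?OQ"
    using bs unfolding b Cons_in_admissible_lists[OF assms] admissible_lists_not_ends_C by auto
  then show "bs \<in> ?S \<union> ?cons ` ?NP \<union> ?cons ` ?OQ"
  proof cases
    case 1
    then show ?thesis
      unfolding b by blast
  next
    case 2
    then show ?thesis
      unfolding b by (intro UnI1 UnI2 rev_image_eqI[of "(b, bs')"]) simp_all
  next
    case 3
    then show ?thesis
      unfolding b by (intro UnI2 rev_image_eqI[of "(b, bs')"]) simp_all
  qed
next
  fix bs assume "bs \<in> ?S \<union> ?cons ` ?NP \<union> ?cons ` ?OQ"
  then consider b where "b \<in> H" "bs = [b]" | b bs' where "bs = b # bs'" "(b, bs') \<in> ?NP \<union> ?OQ"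
    by force
  then show "bs \<in> admissible_lists H"
    by cases (auto simp: Cons_in_admissible_lists[OF assms] admissible_lists_not_ends_C)
qed

lemma weight_fps_admissible_lists:
  assumes "H \<subseteq> blocks"
  shows "weight_fps blocks_size (admissible_lists H)
    = weight_fps block_size H
      + (weight_fps block_size H - weight_fps block_size {b\<in>H. open_block b})
        * weight_fps blocks_size (admissible_lists blocks)
      + weight_fps block_size {b\<in>H. open_block b}
        * (weight_fps blocks_size (admissible_lists {b\<in>blocks. \<not> ends_C (fst b)}) :: 'a :: comm_ring_1 fps)"
proof -
  let ?cons = "\<lambda>(b :: block, bs). b # bs"
  let ?O = "{b\<in>H. open_block b}" and ?N = "{b\<in>H. \<not> open_block b}"
  let ?P = "admissible_lists blocks" and ?Q = "admissible_lists {b\<in>blocks. \<not> ends_C (fst b)}"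
  have no_Nil: "[] \<notin> admissible_lists H'" for H'
    by (simp add: admissible_lists_def)
  have "(weight_fps blocks_size (admissible_lists H) :: 'a fps)
      = weight_fps blocks_size ((\<lambda>b. [b]) ` H \<union> ?cons ` (?N \<times> ?P) \<union> ?cons ` (?O \<times> ?Q))"
    by (simp only: admissible_lists_decomp[OF assms])
  also have "\<dots> = weight_fps blocks_size ((\<lambda>b. [b]) ` H) + weight_fps blocks_size (?cons ` (?N \<times> ?P))
      + weight_fps blocks_size (?cons ` (?O \<times> ?Q))"
  proof -
    have "(\<lambda>b. [b]) ` H \<inter> ?cons ` (?N \<times> ?P) = {}"
      using no_Nil by force
    moreover have "((\<lambda>b. [b]) ` H \<union> ?cons ` (?N \<times> ?P)) \<inter> ?cons ` (?O \<times> ?Q) = {}"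
      using no_Nil by force
    ultimately show ?thesis
      by (simp add: weight_fps_Un[OF finite_fibres_blocks_size])
  qed
  also have "\<dots> = weight_fps block_size H + weight_fps block_size ?N * weight_fps blocks_size ?P
      + weight_fps block_size ?O * weight_fps blocks_size ?Q"
    by (simp only: weight_fps_blocks_size_singleton weight_fps_blocks_size_Cons)
  finally show ?thesis
    by (simp add: weight_fps_filter_compl[OF finite_fibres_block_size])
qed

lemma segment_tails_without_B: "{t\<in>segment_tails. B \<notin> set t} = lists {C, D}"
proof (intro set_eqI iffI)
  fix t assume "t \<in> {t\<in>segment_tails. B \<notin> set t}"
  then have "x \<in> {C, D}" if "x \<in> set t" for x
    using that by (cases x) (auto simp: segment_tails_def)
  then show "t \<in> lists {C, D}"
    by blast
next
  fix t :: "letter list" assume "t \<in> lists {C, D}"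
  then have "set t \<subseteq> {C, D}"
    by blast
  then show "t \<in> {t\<in>segment_tails. B \<notin> set t}"
    by (auto simp: segment_tails_def no_CB_def dest!: nth_mem)
qed

lemma blocks_open: "{b\<in>blocks. open_block b} = {v\<in>segment_tails. starts_B v} \<times> lists {C, D}"
  by (auto simp: blocks_def open_block_def simp flip: segment_tails_without_B)

lemma blocks_not_ends_C: "{b\<in>blocks. \<not> ends_C (fst b)} = {v\<in>segment_tails. \<not> ends_C v} \<times> segment_tails"
  by (auto simp: blocks_def)

lemma blocks_not_ends_C_open:
  "{b\<in>blocks. \<not> ends_C (fst b) \<and> open_block b}
    = {v\<in>segment_tails. starts_B v \<and> \<not> ends_C v} \<times> lists {C, D}"
  by (auto simp: blocks_def open_block_def simp flip: segment_tails_without_B)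

definition admissible_fps :: "rat fps" where
  "admissible_fps = weight_fps blocks_size (admissible_lists blocks)"

lemma admissible_fps_recursion:
  "admissible_fps = fps_X ^ 2 * tails_fps * tails_fps
    + (fps_X ^ 2 * tails_fps * tails_fps - fps_X ^ 3 * tails_fps * CD_fps) * admissible_fps
    + fps_X ^ 3 * tails_fps * CD_fps * (1 - fps_X) * admissible_fps"
proof -
  define G where "G = fps_X ^ 2 * tails_fps * tails_fps"
  define F where "F = fps_X ^ 3 * tails_fps * CD_fps"
  define Q :: "rat fps"
    where "Q = weight_fps blocks_size (admissible_lists {b\<in>blocks. \<not> ends_C (fst b)})"
  have G: "weight_fps block_size blocks = G"
    by (simp add: blocks_def weight_fps_block_size_Times G_def tails_fps_def)
  have F: "weight_fps block_size {b\<in>blocks. open_block b} = F"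
    by (simp add: blocks_open weight_fps_block_size_Times tails_fps_starts_B F_def CD_fps_def
        mult_ac power2_eq_square power3_eq_cube)
  have G': "weight_fps block_size {b\<in>blocks. \<not> ends_C (fst b)} = (1 - fps_X) * G"
    by (simp add: blocks_not_ends_C weight_fps_block_size_Times tails_fps_not_ends_C G_def tails_fps_def)
  have F': "weight_fps block_size {b\<in>{b\<in>blocks. \<not> ends_C (fst b)}. open_block b} = (1 - fps_X) * F"
    by (simp add: blocks_not_ends_C_open weight_fps_block_size_Times tails_fps_starts_B_not_ends_C
        F_def CD_fps_def mult_ac power2_eq_square power3_eq_cube)
  have P: "admissible_fps = G + (G - F) * admissible_fps + F * Q"
    using weight_fps_admissible_lists[where 'a = rat, of blocks, OF order_refl, unfolded G F,
        folded admissible_fps_def Q_def] .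
  have "Q = (1 - fps_X) * G + ((1 - fps_X) * G - (1 - fps_X) * F) * admissible_fps
      + (1 - fps_X) * F * Q"
    using weight_fps_admissible_lists[where 'a = rat, of "{b\<in>blocks. \<not> ends_C (fst b)}",
        unfolded G' F', folded admissible_fps_def Q_def] by blast
  also have "\<dots> = (1 - fps_X) * admissible_fps"
    \<comment> \<open>the equation for Q is (1 - x) times the right-hand side of P\<close>
    by (subst (2) P) (simp add: algebra_simps)
  finally have "Q = (1 - fps_X) * admissible_fps" .
  with P show ?thesis
    unfolding G_def F_def by (simp only: mult.assoc)
qed

lemma linear_recursion_solution:
  fixes x T N P :: "'a :: idom"
  assumes T: "T * (1 - 3 * x + x ^ 2) = 1" and N: "N * (1 - 2 * x) = 1"
    and P: "P = x ^ 2 * T * T + (x ^ 2 * T * T - x ^ 3 * T * N) * P + x ^ 3 * T * N * (1 - x) * P"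
  shows "P * (x ^ 6 - 5 * x ^ 5 + 14 * x ^ 4 - 26 * x ^ 3 + 22 * x ^ 2 - 8 * x + 1) = x ^ 2 * (1 - 2 * x)"
proof -
  define a where "a = 1 - 3 * x + x ^ 2"
  define b where "b = 1 - 2 * x"
  have "P * (a * a * b)
      = (x ^ 2 * T * T + (x ^ 2 * T * T - x ^ 3 * T * N) * P + x ^ 3 * T * N * (1 - x) * P) * (a * a * b)"
    by (subst P) simp
  also have "\<dots> = x ^ 2 * b * (T * a) ^ 2 + (x ^ 2 * b * (T * a) ^ 2 - x ^ 3 * a * (T * a) * (N * b)) * P
      + x ^ 3 * a * (T * a) * (N * b) * (1 - x) * P"
    by algebra
  also have "\<dots> = x ^ 2 * b + (x ^ 2 * b - x ^ 3 * a) * P + x ^ 3 * a * (1 - x) * P"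
    using T N by (simp add: a_def b_def)
  finally have "P * (a * a * b - x ^ 2 * b + x ^ 4 * a) = x ^ 2 * b"
    by algebra
  moreover have "a * a * b - x ^ 2 * b + x ^ 4 * a
      = x ^ 6 - 5 * x ^ 5 + 14 * x ^ 4 - 26 * x ^ 3 + 22 * x ^ 2 - 8 * x + 1"
    unfolding a_def b_def by algebra
  ultimately show ?thesis
    by (simp add: b_def)
qed

section \<open>Block lists and good pairs\<close>

definition words_of_blocks :: "block list \<Rightarrow> letter list \<times> letter list" where
  "words_of_blocks bs = (from_segments (rev (map fst bs)), from_segments (map snd bs))"

lemma admissible_lists_blocks: "admissible_lists blocks = {bs. bs \<noteq> [] \<and> set bs \<subseteq> blocks \<and> admissible bs}"
  by (auto simp: admissible_lists_def)

lemma length_from_segments: "length (from_segments us) = (\<Sum>u\<leftarrow>us. length u + 1)"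
  by (induction us) simp_all

lemma length_words_of_blocks:
  "length (from_segments (map fst bs)) + length (from_segments (map snd bs)) = blocks_size bs"
  by (induction bs) (simp_all add: length_from_segments blocks_size_def block_size_def)

lemma segments_of_blocks:
  assumes "set bs \<subseteq> blocks"
  shows "rev (map fst bs) \<in> lists segment_tails" and "map snd bs \<in> lists segment_tails"
  using assms by (force simp: blocks_def)+

lemma lists_segment_tails_A_free: "us \<in> lists segment_tails \<Longrightarrow> us \<in> lists {u. A \<notin> set u}"
  by (auto simp: segment_tails_def)

lemma good_pair_words_of_blocks:
  assumes "set bs \<subseteq> blocks"
  shows "good_pair n (from_segments (rev (map fst bs))) (from_segments (map snd bs))
    \<longleftrightarrow> bs \<noteq> [] \<and> admissible bs \<and> blocks_size bs = n"
proof -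
  let ?vs = "map fst bs" and ?ts = "map snd bs"
  note tails = segments_of_blocks[OF assms]
  note A_free = tails[THEN lists_segment_tails_A_free]
  have "hd (from_segments us) = A" if "us \<noteq> []" for us
    using that by (cases us) simp_all
  moreover have "count_list (from_segments (rev ?vs)) A = count_list (from_segments ?ts) A"
    using A_free by (simp add: count_from_segments)
  moreover have "no_CB (from_segments us)" if "us \<in> lists segment_tails" for us
    using that by (auto simp: no_CB_from_segments segment_tails_def in_lists_conv_set)
  moreover have "cond_iv (from_segments (rev ?vs)) (from_segments ?ts) \<longleftrightarrow> admissible bs"
    using A_free cond_iv_from_segments[of ?vs ?ts]
    by (simp add: admissible_def successively_iff_nth open_block_def in_lists_conv_set) blast
  ultimately show ?thesis
    using tails by (auto simp: good_pair_def length_words_of_blocks)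
qed

lemma good_pairs_eq_image:
  "{(w, z). good_pair n w z} = words_of_blocks ` {bs\<in>admissible_lists blocks. blocks_size bs = n}"
proof (intro set_eqI iffI)
  fix p assume "p \<in> {(w, z). good_pair n w z}"
  then obtain w z where p: "p = (w, z)" and good: "good_pair n w z"
    by blast
  obtain us where us: "us \<in> lists {u. A \<notin> set u}" "w = from_segments us"
    using good from_segments_surj unfolding good_pair_def by blast
  obtain ts where ts: "ts \<in> lists {u. A \<notin> set u}" "z = from_segments ts"
    using good from_segments_surj unfolding good_pair_def by blast
  have len: "length us = length ts"
    using good us ts by (simp add: good_pair_def count_from_segments)
  have tails: "set us \<subseteq> segment_tails" "set ts \<subseteq> segment_tails"
    using good us ts by (auto simp: good_pair_def segment_tails_def no_CB_from_segments in_lists_conv_set)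
  define bs where "bs = zip (rev us) ts"
  have fst: "map fst bs = rev us" and snd: "map snd bs = ts"
    using len by (simp_all add: bs_def)
  have blocks: "set bs \<subseteq> blocks"
    using tails by (auto simp: bs_def blocks_def subset_iff dest: set_zip_leftD set_zip_rightD)
  have "bs \<noteq> [] \<and> admissible bs \<and> blocks_size bs = n"
    using good good_pair_words_of_blocks[OF blocks] by (simp add: fst snd us ts)
  moreover have "p = words_of_blocks bs"
    by (simp add: p words_of_blocks_def fst snd us ts)
  ultimately show "p \<in> words_of_blocks ` {bs\<in>admissible_lists blocks. blocks_size bs = n}"
    using blocks by (auto simp: admissible_lists_blocks)
next
  fix p assume "p \<in> words_of_blocks ` {bs\<in>admissible_lists blocks. blocks_size bs = n}"
  then obtain bs where "set bs \<subseteq> blocks" "bs \<noteq> []" "admissible bs" "blocks_size bs = n"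
    and "p = words_of_blocks bs"
    by (auto simp: admissible_lists_blocks)
  then show "p \<in> {(w, z). good_pair n w z}"
    by (simp add: words_of_blocks_def good_pair_words_of_blocks)
qed

lemma inj_on_words_of_blocks: "inj_on words_of_blocks (admissible_lists blocks)"
proof (rule inj_onI)
  fix bs bs' assume "bs \<in> admissible_lists blocks" "bs' \<in> admissible_lists blocks"
    and eq: "words_of_blocks bs = words_of_blocks bs'"
  then have "set bs \<subseteq> blocks" "set bs' \<subseteq> blocks"
    by (simp_all add: admissible_lists_blocks)
  note A_free = segments_of_blocks[OF this(1), THEN lists_segment_tails_A_free]
    segments_of_blocks[OF this(2), THEN lists_segment_tails_A_free]
  have "rev (map fst bs) = rev (map fst bs')"
    using eq by (intro inj_onD[OF inj_on_from_segments _ A_free(1,3)]) (simp add: words_of_blocks_def)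
  moreover have "map snd bs = map snd bs'"
    using eq by (intro inj_onD[OF inj_on_from_segments _ A_free(2,4)]) (simp add: words_of_blocks_def)
  ultimately show "bs = bs'"
    by (metis rev_rev_ident zip_map_fst_snd)
qed

lemma h_eq_card: "h n = card {bs\<in>admissible_lists blocks. blocks_size bs = n}"
  unfolding h_def good_pairs_eq_image
  by (rule card_image) (rule inj_on_subset[OF inj_on_words_of_blocks], blast)

lemma two_le_blocks_size: "bs \<noteq> [] \<Longrightarrow> 2 \<le> blocks_size bs"
  by (cases bs) (auto simp: blocks_size_def block_size_def)

lemma good_pairs_fps:
  "Abs_fps (\<lambda>n. if 2 \<le> n then of_nat (h n) else 0 :: rat) = admissible_fps"
proof (rule fps_ext)
  fix n
  have "{bs\<in>admissible_lists blocks. blocks_size bs = n} = {}" if "\<not> 2 \<le> n"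
    using that two_le_blocks_size by (fastforce simp: admissible_lists_def)
  then have "card {bs\<in>admissible_lists blocks. blocks_size bs = n} = 0" if "\<not> 2 \<le> n"
    using that by (metis card.empty)
  then show "Abs_fps (\<lambda>n. if 2 \<le> n then of_nat (h n) else 0 :: rat) $ n = admissible_fps $ n"
    by (simp add: admissible_fps_def weight_fps_nth h_eq_card)
qed

theorem theorem3p3:
  shows "Abs_fps (\<lambda>n. if 2 \<le> n then of_nat (h n) else 0 :: rat)
    = fps_X ^ 2 * (1 - 2 * fps_X) /
      (fps_X ^ 6 - 5 * fps_X ^ 5 + 14 * fps_X ^ 4 - 26 * fps_X ^ 3 + 22 * fps_X ^ 2 - 8 * fps_X + 1)"
proof -
  let ?D = "fps_X ^ 6 - 5 * fps_X ^ 5 + 14 * fps_X ^ 4 - 26 * fps_X ^ 3 + 22 * fps_X ^ 2 - 8 * fps_X + 1 :: rat fps"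
  have "admissible_fps * ?D = fps_X ^ 2 * (1 - 2 * fps_X)"
    using tails_fps_eq CD_fps_eq admissible_fps_recursion by (rule linear_recursion_solution)
  moreover have "?D $ 0 \<noteq> 0"
    by simp
  then have "?D \<noteq> 0"
    by (metis fps_zero_nth)
  ultimately have "fps_X ^ 2 * (1 - 2 * fps_X) / ?D = admissible_fps"
    by (metis nonzero_mult_div_cancel_right)
  then show ?thesis
    by (simp add: good_pairs_fps)
qed

end
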